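(* Let $\mu(x,t)=\min(F(x,t),G(x,t))$. Then for all $x_1,x_2,t>0$, $$\int_{x_1}^{x_2}m(x,t)\,dx=\mu(x_1,t)-\mu(x_2,t),$$ and for all $x,t_1,t_2>0$, $$\int_{t_1}^{t_2}q(x,t)\,dt=\mu(x,t_2)-\mu(x,t_1).$$
   Context: Standing assumptions: $u_0,u_b:[0,\infty)\to\mathbb{R}$ bounded measurable with $u_b>0$; $\rho_0,\rho_b:[0,\infty)\to(0,\infty)$ positive locally bounded measurable. For $x,t,y,\tau\ge0$: $F(y,x,t)=\int_0^y[tu_0(\eta)+\eta-x]\rho_0(\eta)\,d\eta$, $G(\tau,x,t)=\int_0^\tau[x-u_b(\eta)(t-\eta)]\rho_b(\eta)u_b(\eta)\,d\eta$, $F(x,t)=\min_{y\ge0}F(y,x,t)$, $G(x,t)=\min_{\tau\ge0}G(\tau,x,t)$ (minima attained); $y_*$ is the smallest minimizer of $F(\cdot,x,t)$ and $\tau_*$ the smallest minimizer of $G(\cdot,x,t)$. For $x,t>0$: $m(x,t)=\int_0^{y_*(x,t)}\rho_0$ and $q(x,t)=\int_0^{y_*(x,t)}\rho_0u_0$ if $F(x,t)\le G(x,t)$; $m(x,t)=-\int_0^{\tau_*(x,t)}\rho_bu_b$ and $q(x,t)=-\int_0^{\tau_*(x,t)}\rho_bu_b^2$ if $F(x,t)>G(x,t)$. *)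

theory Defs
  imports "HOL-Analysis.Analysis"
begin

text \<open>Data: u0 ub rho0 rhob are functions on [0,inf), modelled as real functions
whose values off [0,inf) are irrelevant.\<close>

definition Ffun :: "(real \<Rightarrow> real) \<Rightarrow> (real \<Rightarrow> real) \<Rightarrow> real \<Rightarrow> real \<Rightarrow> real \<Rightarrow> real" where
  "Ffun u0 rho0 y x t = (LINT \<eta>:{0..y}|lborel. (t * u0 \<eta> + \<eta> - x) * rho0 \<eta>)"

definition Gfun :: "(real \<Rightarrow> real) \<Rightarrow> (real \<Rightarrow> real) \<Rightarrow> real \<Rightarrow> real \<Rightarrow> real \<Rightarrow> real" where
  "Gfun ub rhob \<tau> x t = (LINT \<eta>:{0..\<tau>}|lborel. (x - ub \<eta> * (t - \<eta>)) * rhob \<eta> * ub \<eta>)"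

definition Fmin :: "(real \<Rightarrow> real) \<Rightarrow> (real \<Rightarrow> real) \<Rightarrow> real \<Rightarrow> real \<Rightarrow> real" where
  "Fmin u0 rho0 x t = Inf ((\<lambda>y. Ffun u0 rho0 y x t) ` {0..})"

definition Gmin :: "(real \<Rightarrow> real) \<Rightarrow> (real \<Rightarrow> real) \<Rightarrow> real \<Rightarrow> real \<Rightarrow> real" where
  "Gmin ub rhob x t = Inf ((\<lambda>\<tau>. Gfun ub rhob \<tau> x t) ` {0..})"

definition ystar :: "(real \<Rightarrow> real) \<Rightarrow> (real \<Rightarrow> real) \<Rightarrow> real \<Rightarrow> real \<Rightarrow> real" where
  "ystar u0 rho0 x t = (LEAST y. 0 \<le> y \<and> Ffun u0 rho0 y x t = Fmin u0 rho0 x t)"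

definition taustar :: "(real \<Rightarrow> real) \<Rightarrow> (real \<Rightarrow> real) \<Rightarrow> real \<Rightarrow> real \<Rightarrow> real" where
  "taustar ub rhob x t = (LEAST \<tau>. 0 \<le> \<tau> \<and> Gfun ub rhob \<tau> x t = Gmin ub rhob x t)"

definition mfun :: "(real \<Rightarrow> real) \<Rightarrow> (real \<Rightarrow> real) \<Rightarrow> (real \<Rightarrow> real) \<Rightarrow> (real \<Rightarrow> real)
    \<Rightarrow> real \<Rightarrow> real \<Rightarrow> real" where
  "mfun u0 rho0 ub rhob x t =
     (if Fmin u0 rho0 x t \<le> Gmin ub rhob x t
      then (LINT \<eta>:{0..ystar u0 rho0 x t}|lborel. rho0 \<eta>)
      else - (LINT \<eta>:{0..taustar ub rhob x t}|lborel. rhob \<eta> * ub \<eta>))"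

definition qfun :: "(real \<Rightarrow> real) \<Rightarrow> (real \<Rightarrow> real) \<Rightarrow> (real \<Rightarrow> real) \<Rightarrow> (real \<Rightarrow> real)
    \<Rightarrow> real \<Rightarrow> real \<Rightarrow> real" where
  "qfun u0 rho0 ub rhob x t =
     (if Fmin u0 rho0 x t \<le> Gmin ub rhob x t
      then (LINT \<eta>:{0..ystar u0 rho0 x t}|lborel. rho0 \<eta> * u0 \<eta>)
      else - (LINT \<eta>:{0..taustar ub rhob x t}|lborel. rhob \<eta> * (ub \<eta>)\<^sup>2))"

definition mu :: "(real \<Rightarrow> real) \<Rightarrow> (real \<Rightarrow> real) \<Rightarrow> (real \<Rightarrow> real) \<Rightarrow> (real \<Rightarrow> real)
    \<Rightarrow> real \<Rightarrow> real \<Rightarrow> real" where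
  "mu u0 rho0 ub rhob x t = min (Fmin u0 rho0 x t) (Gmin ub rhob x t)"

end

theory Submission
  imports Defs
begin

(* For fixed y the integrand of F(y,x,t) is affine in (x,t), with x-slope -\<integral>\<^sub>0\<^sup>y \<rho>0 and
   t-slope \<integral>\<^sub>0\<^sup>y \<rho>0 u0; similarly for G(\<tau>,x,t). Hence \<mu> = min(F,G) is an infimum of affine
   functions, and the affine function selected by the smallest minimiser at (x,t) touches \<mu> there:
     \<mu>(x',t') \<le> \<mu>(x,t) - m(x,t) (x' - x) + q(x,t) (t' - t).
   So x \<mapsto> \<mu>(x,t) and t \<mapsto> \<mu>(x,t) are concave with supergradients -m and q. A supergradient
   selection g of a concave \<phi> is monotone, hence integrable, and on a uniform partition of mesh h
   the increments of \<phi> and of \<integral> g differ in total by at most (g a - g b) h; letting h \<rightarrow> 0 gives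
   \<integral>\<^sub>a\<^sup>b g = \<phi> b - \<phi> a. *)

definition supergradient_on :: "(real \<Rightarrow> real) \<Rightarrow> (real \<Rightarrow> real) \<Rightarrow> real set \<Rightarrow> bool" where
  "supergradient_on g \<phi> S \<longleftrightarrow> (\<forall>x\<in>S. \<forall>x'\<in>S. \<phi> x' \<le> \<phi> x + g x * (x' - x))"

lemma supergradient_on_increment_bounds:
  assumes "supergradient_on g \<phi> S" "x \<in> S" "x' \<in> S"
  shows "g x' * (x' - x) \<le> \<phi> x' - \<phi> x" "\<phi> x' - \<phi> x \<le> g x * (x' - x)"
  using assms unfolding supergradient_on_def by (force simp: algebra_simps)+

lemma supergradient_on_antimono:
  assumes "supergradient_on g \<phi> S" "x \<in> S" "x' \<in> S" "x \<le> x'"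
  shows "g x' \<le> g x"
proof (cases "x = x'")
  case False
  then have "g x' * (x' - x) \<le> g x * (x' - x)"
    using supergradient_on_increment_bounds[OF assms(1-3)] by linarith
  then show ?thesis
    using assms(4) False by (simp add: mult_le_cancel_right)
qed simp

lemma eq_if_increments_bounded:
  fixes D g :: "real \<Rightarrow> real"
  assumes "a \<le> b"
    and incr: "\<And>x x'. a \<le> x \<Longrightarrow> x \<le> x' \<Longrightarrow> x' \<le> b \<Longrightarrow> \<bar>D x' - D x\<bar> \<le> (g x - g x') * (x' - x)"
  shows "D b = D a"
proof -
  have bound: "\<bar>D b - D a\<bar> \<le> (g a - g b) * (b - a) / real n" if "n > 0" for n
  proof -
    define h where "h = (b - a) / real n"
    define p where "p k = a + real k * h" for k
    have p: "p 0 = a" "p n = b" "\<And>k. p (Suc k) - p k = h"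
      using that by (simp_all add: p_def h_def field_simps)
    have h: "0 \<le> h" "real n * h = b - a"
      using assms(1) that by (simp_all add: h_def)
    have p_le: "a \<le> p k" "p k \<le> p (Suc k)" "p (Suc k) \<le> b" if "k < n" for k
    proof -
      have "real (Suc k) * h \<le> real n * h"
        using h(1) that by (intro mult_right_mono) auto
      then show "a \<le> p k" "p k \<le> p (Suc k)" "p (Suc k) \<le> b"
        using h by (auto simp: p_def algebra_simps)
    qed
    have "\<bar>D b - D a\<bar> = \<bar>\<Sum>k<n. D (p (Suc k)) - D (p k)\<bar>"
      using sum_lessThan_telescope[of "\<lambda>k. D (p k)" n] p(1,2) by simp
    also have "\<dots> \<le> (\<Sum>k<n. \<bar>D (p (Suc k)) - D (p k)\<bar>)"
      by (rule sum_abs)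
    also have "\<dots> \<le> (\<Sum>k<n. (g (p k) - g (p (Suc k))) * h)"
      using incr p_le by (intro sum_mono) (metis lessThan_iff p(3))
    also have "\<dots> = (g a - g b) * h"
      using sum_lessThan_telescope'[of "\<lambda>k. g (p k)" n] p(1,2)
      by (simp add: sum_distrib_right[symmetric])
    finally show ?thesis by (simp add: h_def)
  qed
  have "\<bar>D b - D a\<bar> \<le> 0"
  proof (rule LIMSEQ_le_const)
    show "(\<lambda>n. (g a - g b) * (b - a) / real n) \<longlonglongrightarrow> 0"
      by (rule lim_const_over_n)
    show "\<exists>N. \<forall>n\<ge>N. \<bar>D b - D a\<bar> \<le> (g a - g b) * (b - a) / real n"
      using bound by (intro exI[of _ 1]) auto
  qed
  then show ?thesis by simp
qed

lemma set_integrable_Icc_if_bounded: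
  fixes f :: "real \<Rightarrow> real"
  assumes "f \<in> borel_measurable (restrict_space borel {a..b})" and "bounded (f ` {a..b})"
  shows "set_integrable lborel {a..b} f"
proof -
  obtain B where B: "\<And>x. x \<in> {a..b} \<Longrightarrow> \<bar>f x\<bar> \<le> B"
    using assms(2) unfolding bounded_real by blast
  have "(\<lambda>x. indicator {a..b} x *\<^sub>R f x) \<in> borel_measurable borel"
    using assms(1) by (subst (asm) borel_measurable_restrict_space_iff) auto
  then show ?thesis
    unfolding set_integrable_def
    by (intro integrableI_bounded_set[where A="{a..b}" and B=B])
      (auto simp: B emeasure_lborel_Icc_eq split: split_indicator)
qed

lemma supergradient_on_set_integrable:
  assumes sg: "supergradient_on g \<phi> {a..b}"
  shows "set_integrable lborel {a..b} g"
proof (rule set_integrable_Icc_if_bounded)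
  have "mono_on {a..b} (\<lambda>x. - g x)"
    using supergradient_on_antimono[OF sg] by (auto intro: mono_onI)
  from borel_measurable_uminus[OF borel_measurable_mono_on_fnc[OF this]]
  show "g \<in> borel_measurable (restrict_space borel {a..b})" by simp
  have "g x \<in> {g b..g a}" if "x \<in> {a..b}" for x
    using supergradient_on_antimono[OF sg] that by auto
  then show "bounded (g ` {a..b})"
    by (meson bounded_closed_interval bounded_subset image_subsetI)
qed

lemma supergradient_on_has_integral:
  assumes sg: "supergradient_on g \<phi> {a..b}" and "a \<le> b"
  shows "(g has_integral \<phi> b - \<phi> a) {a..b}"
proof -
  have int: "g integrable_on {a..b}"
    using set_borel_integral_eq_integral(1)[OF supergradient_on_set_integrable[OF sg]] .
  define D where "D x = \<phi> x - integral {a..x} g" for x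
  have "D b = D a"
  proof (rule eq_if_increments_bounded[OF \<open>a \<le> b\<close>])
    fix x x' assume x: "a \<le> x" "x \<le> x'" "x' \<le> b"
    have int': "g integrable_on {x..x'}"
      using int x by (auto intro: integrable_on_subinterval)
    have "integral {a..x} g + integral {x..x'} g = integral {a..x'} g"
      using x integrable_on_subinterval[OF int, of a x']
      by (intro Henstock_Kurzweil_Integration.integral_combine) auto
    moreover have "integral {x..x'} (\<lambda>_. g x') \<le> integral {x..x'} g"
      by (rule integral_le) (use int' x supergradient_on_antimono[OF sg] in auto)
    moreover have "integral {x..x'} g \<le> integral {x..x'} (\<lambda>_. g x)"
      by (rule integral_le) (use int' x supergradient_on_antimono[OF sg] in auto)
    moreover have "g x' * (x' - x) \<le> \<phi> x' - \<phi> x" "\<phi> x' - \<phi> x \<le> g x * (x' - x)"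
      using supergradient_on_increment_bounds[OF sg] x by auto
    ultimately show "\<bar>D x' - D x\<bar> \<le> (g x - g x') * (x' - x)"
      using x by (simp add: D_def abs_le_iff algebra_simps)
  qed
  then have "integral {a..b} g = \<phi> b - \<phi> a"
    by (simp add: D_def)
  then show ?thesis
    using int by (metis has_integral_integrable_integral)
qed

lemma supergradient_on_interval_integral:
  assumes sg: "supergradient_on g \<phi> {min a b..max a b}"
  shows "interval_lebesgue_integrable lborel (ereal a) (ereal b) g"
    and "(LBINT x=a..b. g x) = \<phi> b - \<phi> a"
proof -
  have *: "interval_lebesgue_integrable lborel (ereal a) (ereal b) g
      \<and> (LBINT x=a..b. g x) = \<phi> b - \<phi> a"
    if sg: "supergradient_on g \<phi> {a..b}" and "a \<le> b" for a b
  proof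
    have int: "set_integrable lborel {a..b} g"
      by (rule supergradient_on_set_integrable[OF sg])
    then show "interval_lebesgue_integrable lborel (ereal a) (ereal b) g"
      unfolding interval_lebesgue_integrable_def using \<open>a \<le> b\<close>
      by (auto intro: set_integrable_subset)
    show "(LBINT x=a..b. g x) = \<phi> b - \<phi> a"
      using interval_integral_eq_integral[OF \<open>a \<le> b\<close> int]
        supergradient_on_has_integral[OF sg \<open>a \<le> b\<close>] by (simp add: integral_unique)
  qed
  have "interval_lebesgue_integrable lborel (ereal a) (ereal b) g \<and> (LBINT x=a..b. g x) = \<phi> b - \<phi> a"
  proof (cases "a \<le> b")
    case True
    then show ?thesis using *[of a b] sg by simp
  next
    case False
    then show ?thesis
      using *[of b a] sg
      by (simp add: interval_integral_endpoints_reverse[of a b]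
          interval_integrable_endpoints_reverse)
  qed
  then show "interval_lebesgue_integrable lborel (ereal a) (ereal b) g"
    "(LBINT x=a..b. g x) = \<phi> b - \<phi> a" by auto
qed

definition loc_bdd_measurable :: "(real \<Rightarrow> real) \<Rightarrow> bool" where
  "loc_bdd_measurable f \<longleftrightarrow>
     f \<in> borel_measurable (restrict_space borel {0..}) \<and> (\<forall>b. bounded (f ` {0..b}))"

lemma loc_bdd_measurableI:
  assumes "set_borel_measurable borel {0..} f" and "\<And>b. 0 \<le> b \<Longrightarrow> \<exists>C. \<forall>\<eta>\<in>{0..b}. \<bar>f \<eta>\<bar> \<le> C"
  shows "loc_bdd_measurable f"
proof -
  have "bounded (f ` {0..b})" for b
    using assms(2)[of b] by (cases "0 \<le> b") (auto simp: bounded_real)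
  with assms(1) show ?thesis
    by (simp add: loc_bdd_measurable_def set_borel_measurable_def
        borel_measurable_restrict_space_iff)
qed

lemma loc_bdd_measurable_const: "loc_bdd_measurable (\<lambda>_. c)"
  by (auto simp: loc_bdd_measurable_def bounded_real)

lemma loc_bdd_measurable_ident: "loc_bdd_measurable (\<lambda>\<eta>. \<eta>)"
  by (simp add: loc_bdd_measurable_def measurable_restrict_space1)

lemma loc_bdd_measurable_add:
  "loc_bdd_measurable f \<Longrightarrow> loc_bdd_measurable g \<Longrightarrow> loc_bdd_measurable (\<lambda>\<eta>. f \<eta> + g \<eta>)"
  by (auto simp: loc_bdd_measurable_def bounded_plus_comp)

lemma loc_bdd_measurable_diff:
  "loc_bdd_measurable f \<Longrightarrow> loc_bdd_measurable g \<Longrightarrow> loc_bdd_measurable (\<lambda>\<eta>. f \<eta> - g \<eta>)"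
  by (auto simp: loc_bdd_measurable_def bounded_minus_comp)

lemma bounded_mult_comp:
  fixes f g :: "'a \<Rightarrow> real"
  assumes "bounded (f ` S)" and "bounded (g ` S)"
  shows "bounded ((\<lambda>x. f x * g x) ` S)"
proof -
  obtain B C where "\<And>x. x \<in> S \<Longrightarrow> \<bar>f x\<bar> \<le> B" "\<And>x. x \<in> S \<Longrightarrow> \<bar>g x\<bar> \<le> C"
    using assms unfolding bounded_real by auto
  then have "\<And>x. x \<in> S \<Longrightarrow> \<bar>f x * g x\<bar> \<le> B * C"
    by (auto simp: abs_mult intro: mult_mono')
  then show ?thesis
    unfolding bounded_real by auto
qed

lemma loc_bdd_measurable_mult:
  "loc_bdd_measurable f \<Longrightarrow> loc_bdd_measurable g \<Longrightarrow> loc_bdd_measurable (\<lambda>\<eta>. f \<eta> * g \<eta>)"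
  by (auto simp: loc_bdd_measurable_def bounded_mult_comp)

lemmas loc_bdd_measurable_intros = loc_bdd_measurable_const loc_bdd_measurable_ident
  loc_bdd_measurable_add loc_bdd_measurable_diff loc_bdd_measurable_mult

lemma loc_bdd_measurable_set_integrable:
  assumes "loc_bdd_measurable f"
  shows "set_integrable lborel {0..y} f"
  using assms unfolding loc_bdd_measurable_def
  by (intro set_integrable_Icc_if_bounded) (auto intro: measurable_restrict_mono)

lemma loc_bdd_measurable_LINT_eq_integral:
  assumes "loc_bdd_measurable f"
  shows "(LINT \<eta>:{0..y}|lborel. f \<eta>) = integral {0..y} f" and "f integrable_on {0..y}"
  using set_borel_integral_eq_integral[OF loc_bdd_measurable_set_integrable[OF assms]] by auto

lemma continuous_on_atLeast_if_atLeastAtMost: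
  fixes f :: "real \<Rightarrow> 'a::topological_space"
  assumes "\<And>b. continuous_on {a..b} f"
  shows "continuous_on {a..} f"
  unfolding continuous_on_eq_continuous_within
proof
  fix x assume "x \<in> {a..}"
  have "at x within {a..} = at x within {a..x + 1}"
    by (rule at_within_nhd[where S="{..<x + 1}"]) auto
  then show "continuous (at x within {a..}) f"
    using assms[of "x + 1"] \<open>x \<in> {a..}\<close> by (simp add: continuous_on_eq_continuous_within)
qed

lemma loc_bdd_measurable_primitive_continuous:
  assumes "loc_bdd_measurable f"
  shows "continuous_on {0..} (\<lambda>y. LINT \<eta>:{0..y}|lborel. f \<eta>)"
proof (rule continuous_on_atLeast_if_atLeastAtMost)
  fix b
  show "continuous_on {0..b} (\<lambda>y. LINT \<eta>:{0..y}|lborel. f \<eta>)"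
    using indefinite_integral_continuous_1[OF loc_bdd_measurable_LINT_eq_integral(2)[OF assms]]
    by (simp add: loc_bdd_measurable_LINT_eq_integral(1)[OF assms])
qed

lemma loc_bdd_measurable_primitive_mono:
  assumes f: "loc_bdd_measurable f" and nonneg: "\<And>\<eta>. Y \<le> \<eta> \<Longrightarrow> 0 \<le> f \<eta>"
    and "0 \<le> Y" "Y \<le> y"
  shows "(LINT \<eta>:{0..Y}|lborel. f \<eta>) \<le> (LINT \<eta>:{0..y}|lborel. f \<eta>)"
proof -
  note int = loc_bdd_measurable_LINT_eq_integral(2)[OF f, of y]
  have "integral {0..Y} f + integral {Y..y} f = integral {0..y} f"
    using assms int by (intro Henstock_Kurzweil_Integration.integral_combine) auto
  moreover have "0 \<le> integral {Y..y} f"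
    using integrable_on_subinterval[OF int, of Y y] assms by (intro integral_nonneg) auto
  ultimately show ?thesis
    by (simp add: loc_bdd_measurable_LINT_eq_integral(1)[OF f])
qed

lemma least_minimizer_halfline:
  fixes h :: "real \<Rightarrow> real"
  assumes cont: "continuous_on {0..} h" and "0 \<le> Y" and mono: "\<And>y. Y \<le> y \<Longrightarrow> h Y \<le> h y"
  defines "m \<equiv> Inf (h ` {0..})"
  shows "0 \<le> (LEAST y. 0 \<le> y \<and> h y = m)" and "h (LEAST y. 0 \<le> y \<and> h y = m) = m"
    and "\<And>y. 0 \<le> y \<Longrightarrow> m \<le> h y"
proof -
  obtain y0 where y0: "y0 \<in> {0..Y}" "\<And>y. y \<in> {0..Y} \<Longrightarrow> h y0 \<le> h y"
  proof -
    have "continuous_on {0..Y} h"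
      using cont by (rule continuous_on_subset) auto
    then show ?thesis
      using continuous_attains_inf[OF compact_Icc, of 0 Y h] \<open>0 \<le> Y\<close> that by auto
  qed
  have y0_min: "h y0 \<le> h y" if "0 \<le> y" for y
  proof (cases "y \<le> Y")
    case False
    then show ?thesis
      using y0(2)[of Y] mono[of y] \<open>0 \<le> Y\<close> by auto
  qed (use y0 that in auto)
  then have m: "m = h y0"
    unfolding m_def using y0(1) by (intro cInf_eq_minimum) auto
  then show "\<And>y. 0 \<le> y \<Longrightarrow> m \<le> h y"
    using y0_min by simp
  define S where "S = {y \<in> {0..}. h y = m}"
  have "closed S"
    unfolding S_def by (rule continuous_closed_preimage_constant[OF cont]) simp
  moreover have "y0 \<in> S" "bdd_below S"
    using y0(1) m by (auto simp: S_def intro: bdd_belowI[of _ 0])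
  ultimately have "Inf S \<in> S"
    by (intro closed_contains_Inf) auto
  moreover have "(LEAST y. 0 \<le> y \<and> h y = m) = Inf S"
    using \<open>Inf S \<in> S\<close> \<open>bdd_below S\<close> by (intro Least_equality) (auto simp: S_def intro: cInf_lower)
  ultimately show "0 \<le> (LEAST y. 0 \<le> y \<and> h y = m)" "h (LEAST y. 0 \<le> y \<and> h y = m) = m"
    by (auto simp: S_def)
qed

(* Only u0 needs a global bound: it makes F(\<cdot>,x,t) nondecreasing for large y, whereas for G the
   positivity of ub suffices. *)
locale initial_boundary_data =
  fixes u0 ub rho0 rhob :: "real \<Rightarrow> real"
  assumes u0: "loc_bdd_measurable u0" and ub: "loc_bdd_measurable ub"
    and rho0: "loc_bdd_measurable rho0" and rhob: "loc_bdd_measurable rhob"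
    and u0_bounded: "bounded (u0 ` {0..})"
    and ub_pos: "\<And>\<eta>. 0 \<le> \<eta> \<Longrightarrow> 0 < ub \<eta>"
    and rho0_pos: "\<And>\<eta>. 0 \<le> \<eta> \<Longrightarrow> 0 < rho0 \<eta>"
    and rhob_pos: "\<And>\<eta>. 0 \<le> \<eta> \<Longrightarrow> 0 < rhob \<eta>"
begin

abbreviation "\<mu> \<equiv> mu u0 rho0 ub rhob"
abbreviation "m \<equiv> mfun u0 rho0 ub rhob"
abbreviation "q \<equiv> qfun u0 rho0 ub rhob"

lemma Ffun_shift:
  "Ffun u0 rho0 y x' t' = Ffun u0 rho0 y x t
     - (x' - x) * (LINT \<eta>:{0..y}|lborel. rho0 \<eta>)
     + (t' - t) * (LINT \<eta>:{0..y}|lborel. rho0 \<eta> * u0 \<eta>)"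
proof -
  have int: "set_integrable lborel {0..y} f" if "loc_bdd_measurable f" for f
    using that by (rule loc_bdd_measurable_set_integrable)
  have "Ffun u0 rho0 y x' t' = (LINT \<eta>:{0..y}|lborel.
      ((t * u0 \<eta> + \<eta> - x) * rho0 \<eta> - (x' - x) * rho0 \<eta>) + (t' - t) * (rho0 \<eta> * u0 \<eta>))"
    unfolding Ffun_def by (rule set_lebesgue_integral_cong) (auto simp: algebra_simps)
  also have "\<dots> = Ffun u0 rho0 y x t
      - (x' - x) * (LINT \<eta>:{0..y}|lborel. rho0 \<eta>)
      + (t' - t) * (LINT \<eta>:{0..y}|lborel. rho0 \<eta> * u0 \<eta>)"
    unfolding Ffun_def
    by (simp add: set_integral_add set_integral_diff int loc_bdd_measurable_intros u0 rho0)
  finally show ?thesis .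
qed

lemma Gfun_shift:
  "Gfun ub rhob \<tau> x' t' = Gfun ub rhob \<tau> x t
     + (x' - x) * (LINT \<eta>:{0..\<tau>}|lborel. rhob \<eta> * ub \<eta>)
     - (t' - t) * (LINT \<eta>:{0..\<tau>}|lborel. rhob \<eta> * (ub \<eta>)\<^sup>2)"
proof -
  have int: "set_integrable lborel {0..\<tau>} f" if "loc_bdd_measurable f" for f
    using that by (rule loc_bdd_measurable_set_integrable)
  have "Gfun ub rhob \<tau> x' t' = (LINT \<eta>:{0..\<tau>}|lborel.
      ((x - ub \<eta> * (t - \<eta>)) * rhob \<eta> * ub \<eta> + (x' - x) * (rhob \<eta> * ub \<eta>))
        - (t' - t) * (rhob \<eta> * (ub \<eta> * ub \<eta>)))"
    unfolding Gfun_def by (rule set_lebesgue_integral_cong) (auto simp: algebra_simps)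
  also have "\<dots> = Gfun ub rhob \<tau> x t
      + (x' - x) * (LINT \<eta>:{0..\<tau>}|lborel. rhob \<eta> * ub \<eta>)
      - (t' - t) * (LINT \<eta>:{0..\<tau>}|lborel. rhob \<eta> * (ub \<eta>)\<^sup>2)"
    unfolding Gfun_def
    by (simp add: set_integral_add set_integral_diff int loc_bdd_measurable_intros ub rhob
        power2_eq_square)
  finally show ?thesis .
qed

lemma ystar_minimizes:
  assumes "0 \<le> t"
  shows "0 \<le> ystar u0 rho0 x t" and "Ffun u0 rho0 (ystar u0 rho0 x t) x t = Fmin u0 rho0 x t"
    and "\<And>y. 0 \<le> y \<Longrightarrow> Fmin u0 rho0 x t \<le> Ffun u0 rho0 y x t"
proof -
  let ?f = "\<lambda>\<eta>. (t * u0 \<eta> + \<eta> - x) * rho0 \<eta>"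
  have f: "loc_bdd_measurable ?f"
    by (intro loc_bdd_measurable_intros u0 rho0)
  obtain C where C: "\<And>\<eta>. 0 \<le> \<eta> \<Longrightarrow> \<bar>u0 \<eta>\<bar> \<le> C"
    using u0_bounded unfolding bounded_real by auto
  define Y where "Y = max 0 (x + t * C)"
  have "0 \<le> Y" by (simp add: Y_def)
  have nonneg: "0 \<le> ?f \<eta>" if "Y \<le> \<eta>" for \<eta>
  proof -
    have "- C \<le> u0 \<eta>"
      using C[of \<eta>] that by (auto simp: Y_def)
    then have "t * - C \<le> t * u0 \<eta>"
      using \<open>0 \<le> t\<close> by (rule mult_left_mono)
    then show ?thesis
      using that rho0_pos[of \<eta>] by (auto simp: Y_def)
  qed
  from least_minimizer_halfline[OF loc_bdd_measurable_primitive_continuous[OF f] \<open>0 \<le> Y\<close>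
      loc_bdd_measurable_primitive_mono[OF f nonneg \<open>0 \<le> Y\<close>]]
  show "0 \<le> ystar u0 rho0 x t" "Ffun u0 rho0 (ystar u0 rho0 x t) x t = Fmin u0 rho0 x t"
    "\<And>y. 0 \<le> y \<Longrightarrow> Fmin u0 rho0 x t \<le> Ffun u0 rho0 y x t"
    unfolding ystar_def Fmin_def Ffun_def by auto
qed

lemma taustar_minimizes:
  assumes "0 \<le> x"
  shows "0 \<le> taustar ub rhob x t" and "Gfun ub rhob (taustar ub rhob x t) x t = Gmin ub rhob x t"
    and "\<And>\<tau>. 0 \<le> \<tau> \<Longrightarrow> Gmin ub rhob x t \<le> Gfun ub rhob \<tau> x t"
proof -
  let ?f = "\<lambda>\<eta>. (x - ub \<eta> * (t - \<eta>)) * rhob \<eta> * ub \<eta>"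
  have f: "loc_bdd_measurable ?f"
    by (intro loc_bdd_measurable_intros ub rhob)
  define Y where "Y = max 0 t"
  have "0 \<le> Y" by (simp add: Y_def)
  have nonneg: "0 \<le> ?f \<eta>" if "Y \<le> \<eta>" for \<eta>
  proof -
    have "ub \<eta> * (t - \<eta>) \<le> 0"
      using that ub_pos[of \<eta>] by (auto simp: Y_def mult_nonneg_nonpos)
    then show ?thesis
      using that \<open>0 \<le> x\<close> ub_pos[of \<eta>] rhob_pos[of \<eta>] by (auto simp: Y_def)
  qed
  from least_minimizer_halfline[OF loc_bdd_measurable_primitive_continuous[OF f] \<open>0 \<le> Y\<close>
      loc_bdd_measurable_primitive_mono[OF f nonneg \<open>0 \<le> Y\<close>]]
  show "0 \<le> taustar ub rhob x t" "Gfun ub rhob (taustar ub rhob x t) x t = Gmin ub rhob x t"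
    "\<And>\<tau>. 0 \<le> \<tau> \<Longrightarrow> Gmin ub rhob x t \<le> Gfun ub rhob \<tau> x t"
    unfolding taustar_def Gmin_def Gfun_def by auto
qed

lemma mu_supergradient:
  assumes "0 \<le> x" "0 \<le> t" "0 \<le> x'" "0 \<le> t'"
  shows "\<mu> x' t' \<le> \<mu> x t - m x t * (x' - x) + q x t * (t' - t)"
proof (cases "Fmin u0 rho0 x t \<le> Gmin ub rhob x t")
  case True
  let ?y = "ystar u0 rho0 x t"
  have "\<mu> x' t' \<le> Fmin u0 rho0 x' t'"
    by (simp add: mu_def)
  also have "\<dots> \<le> Ffun u0 rho0 ?y x' t'"
    using ystar_minimizes(1,3) assms by blast
  also have "\<dots> = Ffun u0 rho0 ?y x t
     - (x' - x) * (LINT \<eta>:{0..?y}|lborel. rho0 \<eta>)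
     + (t' - t) * (LINT \<eta>:{0..?y}|lborel. rho0 \<eta> * u0 \<eta>)"
    by (rule Ffun_shift)
  finally show ?thesis
    using True ystar_minimizes(2) assms by (simp add: mu_def mfun_def qfun_def algebra_simps)
next
  case False
  let ?\<tau> = "taustar ub rhob x t"
  have "\<mu> x' t' \<le> Gmin ub rhob x' t'"
    by (simp add: mu_def)
  also have "\<dots> \<le> Gfun ub rhob ?\<tau> x' t'"
    using taustar_minimizes(1,3) assms by blast
  also have "\<dots> = Gfun ub rhob ?\<tau> x t
     + (x' - x) * (LINT \<eta>:{0..?\<tau>}|lborel. rhob \<eta> * ub \<eta>)
     - (t' - t) * (LINT \<eta>:{0..?\<tau>}|lborel. rhob \<eta> * (ub \<eta>)\<^sup>2)"
    by (rule Gfun_shift)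
  finally show ?thesis
    using False taustar_minimizes(2) assms by (simp add: mu_def mfun_def qfun_def algebra_simps)
qed

lemma interval_integral_mfun:
  assumes "0 \<le> x1" "0 \<le> x2" "0 \<le> t"
  shows "interval_lebesgue_integrable lborel (ereal x1) (ereal x2) (\<lambda>x. m x t)"
    and "(LBINT x=x1..x2. m x t) = \<mu> x1 t - \<mu> x2 t"
proof -
  have "supergradient_on (\<lambda>x. - m x t) (\<lambda>x. \<mu> x t) {min x1 x2..max x1 x2}"
    unfolding supergradient_on_def using assms mu_supergradient[of _ t _ t] by auto
  note sg = supergradient_on_interval_integral[OF this]
  from interval_lebesgue_integrable_mult_right[OF sg(1), of "-1"]
  show "interval_lebesgue_integrable lborel (ereal x1) (ereal x2) (\<lambda>x. m x t)"
    by simp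
  show "(LBINT x=x1..x2. m x t) = \<mu> x1 t - \<mu> x2 t"
    using sg(2) interval_lebesgue_integral_uminus[of lborel x1 x2 "\<lambda>x. m x t"] by simp
qed

lemma interval_integral_qfun:
  assumes "0 \<le> x" "0 \<le> t1" "0 \<le> t2"
  shows "interval_lebesgue_integrable lborel (ereal t1) (ereal t2) (\<lambda>t. q x t)"
    and "(LBINT t=t1..t2. q x t) = \<mu> x t2 - \<mu> x t1"
proof -
  have "supergradient_on (\<lambda>t. q x t) (\<lambda>t. \<mu> x t) {min t1 t2..max t1 t2}"
    unfolding supergradient_on_def using assms mu_supergradient[of x _ x] by auto
  from supergradient_on_interval_integral[OF this]
  show "interval_lebesgue_integrable lborel (ereal t1) (ereal t2) (\<lambda>t. q x t)"
    "(LBINT t=t1..t2. q x t) = \<mu> x t2 - \<mu> x t1" .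
qed

end

theorem lemma3p5:
  fixes u0 ub rho0 rhob :: "real \<Rightarrow> real"
  assumes u0_meas: "set_borel_measurable borel {0..} u0"
      and ub_meas: "set_borel_measurable borel {0..} ub"
      and rho0_meas: "set_borel_measurable borel {0..} rho0"
      and rhob_meas: "set_borel_measurable borel {0..} rhob"
      and u0_bdd: "\<exists>C. \<forall>\<eta>\<ge>0. \<bar>u0 \<eta>\<bar> \<le> C"
      and ub_bdd: "\<exists>C. \<forall>\<eta>\<ge>0. \<bar>ub \<eta>\<bar> \<le> C"
      and ub_pos: "\<forall>\<eta>\<ge>0. ub \<eta> > 0"
      and rho0_pos: "\<forall>\<eta>\<ge>0. rho0 \<eta> > 0"
      and rhob_pos: "\<forall>\<eta>\<ge>0. rhob \<eta> > 0"
      and rho0_lbdd: "\<forall>b\<ge>0. \<exists>C. \<forall>\<eta>\<in>{0..b}. rho0 \<eta> \<le> C"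
      and rhob_lbdd: "\<forall>b\<ge>0. \<exists>C. \<forall>\<eta>\<in>{0..b}. rhob \<eta> \<le> C"
  shows "(\<forall>x1 x2 t. x1 > 0 \<longrightarrow> x2 > 0 \<longrightarrow> t > 0 \<longrightarrow>
            interval_lebesgue_integrable lborel (ereal x1) (ereal x2)
              (\<lambda>x. mfun u0 rho0 ub rhob x t) \<and>
            (LBINT x=x1..x2. mfun u0 rho0 ub rhob x t)
              = mu u0 rho0 ub rhob x1 t - mu u0 rho0 ub rhob x2 t)
       \<and> (\<forall>x t1 t2. x > 0 \<longrightarrow> t1 > 0 \<longrightarrow> t2 > 0 \<longrightarrow>
            interval_lebesgue_integrable lborel (ereal t1) (ereal t2)
              (\<lambda>t. qfun u0 rho0 ub rhob x t) \<and>
            (LBINT t=t1..t2. qfun u0 rho0 ub rhob x t)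
              = mu u0 rho0 ub rhob x t2 - mu u0 rho0 ub rhob x t1)"
proof -
  interpret initial_boundary_data u0 ub rho0 rhob
  proof
    show "loc_bdd_measurable u0" "loc_bdd_measurable ub"
      using u0_meas u0_bdd ub_meas ub_bdd by (auto intro!: loc_bdd_measurableI) fastforce+
    show "loc_bdd_measurable rho0" "loc_bdd_measurable rhob"
      using rho0_meas rho0_lbdd rho0_pos rhob_meas rhob_lbdd rhob_pos
      by (auto intro!: loc_bdd_measurableI simp: abs_of_pos)
    show "bounded (u0 ` {0..})"
      using u0_bdd by (auto simp: bounded_real)
  qed (use ub_pos rho0_pos rhob_pos in auto)
  show ?thesis
    using interval_integral_mfun interval_integral_qfun by (auto simp: less_imp_le)
qed

end
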